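(* Let $H$ and $K$ be subgroups of a finite group $G$ such that $HK$ is a subgroup and $|H|_2=|H\cap K|_2$. Then $H\cap K$ is a perfect code of $K$ if and only if $H$ is a perfect code of $HK$.
   Context: $|X|_2$ denotes the largest power of $2$ dividing $|X|$. For a group $G$ with identity $e$ and an inverse-closed subset $S\subseteq G\setminus\{e\}$, the Cayley graph $\mathrm{Cay}(G,S)$ has vertex set $G$ and edges $\{g,sg\}$ for $s\in S$, $g\in G$. A perfect code in a graph is an independent set $C$ of vertices such that every vertex outside $C$ is adjacent to exactly one vertex of $C$. A subgroup $H$ of $G$ is a perfect code of $G$ if some Cayley graph of $G$ admits $H$ as a perfect code. *)

theory Defs
  imports "HOL-Algebra.Coset" "HOL-Computational_Algebra.Primes"
begin

definition two_part :: "nat \<Rightarrow> nat" where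
  "two_part n = 2 ^ multiplicity (2::nat) n"

definition cay_adj :: "('a, 'b) monoid_scheme \<Rightarrow> 'a set \<Rightarrow> 'a \<Rightarrow> 'a \<Rightarrow> bool" where
  "cay_adj G S x y \<longleftrightarrow> x \<in> carrier G \<and> y \<in> carrier G \<and>
     (\<exists>s\<in>S. y = s \<otimes>\<^bsub>G\<^esub> x \<or> x = s \<otimes>\<^bsub>G\<^esub> y)"

definition cay_perfect_code :: "('a, 'b) monoid_scheme \<Rightarrow> 'a set \<Rightarrow> 'a set \<Rightarrow> bool" where
  "cay_perfect_code G S C \<longleftrightarrow> C \<subseteq> carrier G \<and>
     (\<forall>x\<in>C. \<forall>y\<in>C. \<not> cay_adj G S x y) \<and>
     (\<forall>v\<in>carrier G - C. \<exists>!c. c \<in> C \<and> cay_adj G S v c)"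

definition subgroup_perfect_code :: "'a set \<Rightarrow> ('a, 'b) monoid_scheme \<Rightarrow> bool" where
  "subgroup_perfect_code H G \<longleftrightarrow> subgroup H G \<and>
     (\<exists>S. S \<subseteq> carrier G - {\<one>\<^bsub>G\<^esub>} \<and> (\<forall>s\<in>S. inv\<^bsub>G\<^esub> s \<in> S) \<and>
          cay_perfect_code G S H)"

end

theory Submission
  imports Defs
begin

text \<open>A subgroup is a perfect code exactly when it has an inverse-closed right transversal.
  Write \<open>L = H \<inter> K\<close>. A transversal of \<open>L\<close> in \<open>K\<close> is one of \<open>H\<close> in \<open>H K\<close>, which gives one
  direction. Conversely, pairing each right coset of \<open>L\<close> with one in the inverse double coset
  builds an inverse-closed transversal of \<open>L\<close> in \<open>K\<close>, provided every self-inverse double coset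
  \<open>L g L\<close> made of an odd number of cosets of \<open>L\<close> contains an involution. For such \<open>g\<close> choose
  \<open>x \<in> L g L\<close> with \<open>x\<^sup>2 \<in> L\<close>. As \<open>|H|\<close> and \<open>|L|\<close> have the same 2-part, both
  \<open>|H : H \<inter> x\<inverse>Hx|\<close> and \<open>|H \<inter> x\<inverse>Hx : L \<inter> x\<inverse>Lx|\<close> are odd. By the first, the inverse-closed
  transversal of \<open>H\<close> in \<open>H K\<close> meets \<open>H x H\<close> in a set of odd size and so contains an involution,
  which can be conjugated into \<open>H x\<close>; by the second, the involution \<open>c \<mapsto> x\<inverse> c z\<close> of the
  right cosets of \<open>L \<inter> x\<inverse>Lx\<close> in \<open>H \<inter> x\<inverse>Hx\<close> fixes a coset, and the corresponding conjugate of
  the involution \<open>z \<in> H x\<close> lies in \<open>L x\<close>.\<close>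

lemma involution_fixpoint_if_odd_card:
  assumes "finite X" "odd (card X)"
    and "\<And>x. x \<in> X \<Longrightarrow> f x \<in> X" "\<And>x. x \<in> X \<Longrightarrow> f (f x) = x"
  shows "\<exists>x\<in>X. f x = x"
  using assms
proof (induction X rule: finite_psubset_induct)
  case (psubset X)
  obtain x where x: "x \<in> X"
    using \<open>odd (card X)\<close> by fastforce
  show ?case
  proof (cases "f x = x")
    case False
    let ?Y = "X - {x, f x}"
    have "{x, f x} \<subseteq> X"
      using x psubset.prems(2) by blast
    then have "card X = card ?Y + 2"
      using False \<open>finite X\<close> card_mono[of X "{x, f x}"] by (simp add: card_Diff_subset)
    moreover have "f y \<in> ?Y" if "y \<in> ?Y" for y
      using that psubset.prems(2,3) x by (metis Diff_iff insertCI insertE singletonD)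
    ultimately have "\<exists>y\<in>?Y. f y = y"
      using psubset.prems x by (intro psubset.IH) auto
    then show ?thesis by blast
  qed (use x in blast)
qed

lemma two_part_mult: "m \<noteq> 0 \<Longrightarrow> n \<noteq> 0 \<Longrightarrow> two_part (m * n) = two_part m * two_part n"
  by (simp add: two_part_def prime_elem_multiplicity_mult_distrib power_add)

lemma two_part_eq_1_iff: "n \<noteq> 0 \<Longrightarrow> two_part n = 1 \<longleftrightarrow> odd n"
  by (simp add: two_part_def multiplicity_eq_zero_iff)

lemma odd_factors_if_two_part_eq:
  assumes "two_part (a * (b * n)) = two_part (c * n)" "odd c" "a \<noteq> 0" "b \<noteq> 0" "n \<noteq> 0"
  shows "odd a" "odd b"
proof -
  have "c \<noteq> 0"
    using assms(2) by presburger
  then have "two_part c = 1"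
    using assms(2) two_part_eq_1_iff by blast
  then have "(two_part a * two_part b) * two_part n = 1 * two_part n"
    using assms two_part_mult[of a "b * n"] two_part_mult[of b n] two_part_mult[of c n] \<open>c \<noteq> 0\<close>
    by (simp add: mult.assoc)
  then have "two_part a * two_part b = 1"
    unfolding two_part_def by (metis mult_right_cancel power_not_zero zero_neq_numeral)
  then show "odd a" "odd b"
    using assms(3,4) two_part_eq_1_iff by simp_all
qed

lemma card_image_eq_if_same_kernel:
  assumes "\<And>a b. a \<in> A \<Longrightarrow> b \<in> A \<Longrightarrow> f a = f b \<longleftrightarrow> g a = g b"
  shows "card (f ` A) = card (g ` A)"
proof -
  define h where "h y = g (SOME a. a \<in> A \<and> f a = y)" for y
  have h: "h (f a) = g a" if "a \<in> A" for a
    using someI_ex[of "\<lambda>a'. a' \<in> A \<and> f a' = f a"] assms that by (auto simp: h_def)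
  have "bij_betw h (f ` A) (g ` A)"
    by (rule bij_betw_imageI) (auto simp: inj_on_def h assms image_iff)
  then show ?thesis
    by (rule bij_betw_same_card)
qed

lemma ex1_iff_card_eq_1: "(\<exists>!x. P x) \<longleftrightarrow> card {x. P x} = 1"
proof
  assume "\<exists>!x. P x"
  then obtain a where "{x. P x} = {a}"
    by blast
  then show "card {x. P x} = 1"
    by simp
next
  assume "card {x. P x} = 1"
  then obtain a where "{x. P x} = {a}"
    using card_1_singleton_iff by (metis One_nat_def)
  then show "\<exists>!x. P x"
    by (metis mem_Collect_eq singleton_iff)
qed

lemma ex1_iff_if_bij_betw: "bij_betw f {x. P x} {y. Q y} \<Longrightarrow> (\<exists>!x. P x) \<longleftrightarrow> (\<exists>!y. Q y)"
  by (simp add: ex1_iff_card_eq_1 bij_betw_same_card)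

lemma card_filter_Diff:
  assumes "finite W" "X \<subseteq> W"
  shows "card {C \<in> W. P C} = card {C \<in> W - X. P C} + card {C \<in> X. P C}"
proof -
  have "{C \<in> W. P C} = {C \<in> W - X. P C} \<union> {C \<in> X. P C}"
    using assms(2) by blast
  also have "card \<dots> = card {C \<in> W - X. P C} + card {C \<in> X. P C}"
    by (rule card_Un_disjoint) (use assms in \<open>auto intro: finite_subset\<close>)
  finally show ?thesis .
qed

lemma card_filter_pair_swap:
  assumes "P A \<longleftrightarrow> Q B" "P B \<longleftrightarrow> Q A"
  shows "card {C \<in> {A, B}. P C} = card {C \<in> {A, B}. Q C}"
proof -
  have pair: "{C \<in> {A, B}. R C} = (if R A then {A} else {}) \<union> (if R B then {B} else {})" for R
    by auto
  show ?thesis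
    unfolding pair using assms by (cases "A = B") auto
qed

lemma even_card_filter_pair:
  assumes "P A \<longleftrightarrow> P B" "P A \<Longrightarrow> A \<noteq> B"
  shows "even (card {C \<in> {A, B}. P C})"
proof -
  have "{C \<in> {A, B}. P C} = (if P A then {A, B} else {})"
    using assms(1) by auto
  then show ?thesis
    using assms(2) by simp
qed

section \<open>Cosets and double cosets\<close>

definition double_coset :: "('a, 'b) monoid_scheme \<Rightarrow> 'a set \<Rightarrow> 'a \<Rightarrow> 'a set" where
  "double_coset G J g = {a \<otimes>\<^bsub>G\<^esub> g \<otimes>\<^bsub>G\<^esub> b | a b. a \<in> J \<and> b \<in> J}"

text \<open>\<open>inter_conj G J x\<close> is \<open>J \<inter> x\<inverse> J x\<close>; the right cosets of \<open>J\<close> inside \<open>J x J\<close>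
  correspond to its right cosets in \<open>J\<close>.\<close>

definition inter_conj :: "('a, 'b) monoid_scheme \<Rightarrow> 'a set \<Rightarrow> 'a \<Rightarrow> 'a set" where
  "inter_conj G J x = {l \<in> J. x \<otimes>\<^bsub>G\<^esub> l \<otimes>\<^bsub>G\<^esub> inv\<^bsub>G\<^esub> x \<in> J}"

context group
begin

lemma m_inv_cancel_left [simp]: "x \<in> carrier G \<Longrightarrow> y \<in> carrier G \<Longrightarrow> x \<otimes> (inv x \<otimes> y) = y"
  by (simp add: m_assoc [symmetric])

lemma inv_m_cancel_left [simp]: "x \<in> carrier G \<Longrightarrow> y \<in> carrier G \<Longrightarrow> inv x \<otimes> (x \<otimes> y) = y"
  by (simp add: m_assoc [symmetric])

lemma r_coset_mem_iff:
  assumes "subgroup J G" "a \<in> carrier G"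
  shows "t \<in> J #> a \<longleftrightarrow> t \<in> carrier G \<and> t \<otimes> inv a \<in> J"
  using assms subgroup.rcos_module[OF assms(1) is_group] r_coset_subset_G[OF subgroup.subset]
  by blast

lemma r_coset_eq_iff:
  assumes "subgroup J G" "a \<in> carrier G" "b \<in> carrier G"
  shows "J #> a = J #> b \<longleftrightarrow> a \<otimes> inv b \<in> J"
  using assms rcos_self[of a J] repr_independence[of a J b] by (auto simp: r_coset_mem_iff)

lemma lagrange_within:
  assumes "subgroup J G" "subgroup B G" "J \<subseteq> B" "finite B"
  shows "card ((\<lambda>b. J #> b) ` B) * card J = card B"
proof -
  interpret B: group "G\<lparr>carrier := B\<rparr>"
    by (rule subgroup.subgroup_is_group[OF assms(2) is_group])
  have "card (rcosets\<^bsub>G\<lparr>carrier := B\<rparr>\<^esub> J) * card J = card B"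
    using B.lagrange[OF subgroup_incl[OF assms(1-3)]] by (simp add: order_def)
  moreover have "rcosets\<^bsub>G\<lparr>carrier := B\<rparr>\<^esub> J = (\<lambda>b. J #> b) ` B"
    by (auto simp: RCOSETS_def)
  ultimately show ?thesis
    by simp
qed

lemma r_coset_fixed_by_involution:
  assumes N: "subgroup N G" and M: "subgroup M G" and "finite M"
    and odd: "odd (card ((\<lambda>c. N #> c) ` M))"
    and closed: "\<And>c. c \<in> M \<Longrightarrow> \<phi> c \<in> M"
    and compat: "\<And>n c. n \<in> N \<Longrightarrow> c \<in> M \<Longrightarrow> \<phi> (n \<otimes> c) \<in> N #> \<phi> c"
    and invol: "\<And>c. c \<in> M \<Longrightarrow> \<phi> (\<phi> c) \<in> N #> c"
  shows "\<exists>c\<in>M. \<phi> c \<in> N #> c"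
proof -
  have Mc: "\<And>c. c \<in> M \<Longrightarrow> c \<in> carrier G"
    using subgroup.mem_carrier[OF M] .
  define f where "f A = (\<Union>a\<in>A. N #> \<phi> a)" for A
  have f: "f (N #> c) = N #> \<phi> c" if c: "c \<in> M" for c
  proof -
    have "N #> \<phi> a = N #> \<phi> c" if a: "a \<in> N #> c" for a
    proof -
      obtain n where "n \<in> N" "a = n \<otimes> c"
        using a by (auto simp: r_coset_def)
      then have "\<phi> a \<in> N #> \<phi> c"
        using compat c by simp
      then show ?thesis
        using repr_independence[OF _ Mc[OF closed[OF c]] N] by simp
    qed
    then have "f (N #> c) = (\<Union>a\<in>N #> c. N #> \<phi> c)"
      unfolding f_def by (rule SUP_cong[OF refl])
    also have "\<dots> = N #> \<phi> c"
      using rcos_self[OF Mc[OF c] N] by blast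
    finally show ?thesis .
  qed
  have "\<exists>A\<in>(\<lambda>c. N #> c) ` M. f A = A"
  proof (rule involution_fixpoint_if_odd_card[OF _ odd])
    show "finite ((\<lambda>c. N #> c) ` M)"
      using \<open>finite M\<close> by simp
    fix A assume "A \<in> (\<lambda>c. N #> c) ` M"
    then obtain c where c: "c \<in> M" "A = N #> c"
      by blast
    then show "f A \<in> (\<lambda>c. N #> c) ` M"
      using f closed by blast
    have "f (f A) = N #> \<phi> (\<phi> c)"
      using c f closed by simp
    also have "\<dots> = A"
      using c repr_independence[OF invol Mc N] by simp
    finally show "f (f A) = A" .
  qed
  then obtain c where c: "c \<in> M" "N #> \<phi> c = N #> c"
    using f by auto
  then show ?thesis
    using rcos_self[OF Mc[OF closed] N] by blast
qed

lemma mem_double_coset_iff: "z \<in> double_coset G J g \<longleftrightarrow> (\<exists>a\<in>J. \<exists>b\<in>J. z = a \<otimes> g \<otimes> b)"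
  by (auto simp: double_coset_def)

lemma double_coset_self:
  assumes "subgroup J G" "g \<in> carrier G"
  shows "g \<in> double_coset G J g"
  using assms subgroup.one_closed[OF assms(1)] by (force simp: mem_double_coset_iff)

lemma double_coset_subset:
  assumes "subgroup J G" "subgroup C G" "J \<subseteq> C" "g \<in> C"
  shows "double_coset G J g \<subseteq> C"
  using assms by (auto simp: mem_double_coset_iff intro!: subgroup.m_closed)

lemma double_coset_eq_if_mem:
  assumes J: "subgroup J G" and g: "g \<in> carrier G" and z: "z \<in> double_coset G J g"
  shows "double_coset G J z = double_coset G J g"
proof -
  obtain a b where ab: "a \<in> J" "b \<in> J" "z = a \<otimes> g \<otimes> b"
    using z by (auto simp: mem_double_coset_iff)
  have ac: "a \<in> carrier G" "b \<in> carrier G"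
    using ab subgroup.mem_carrier[OF J] by auto
  show ?thesis
  proof (intro equalityI subsetI)
    fix w assume "w \<in> double_coset G J z"
    then obtain c d where cd: "c \<in> J" "d \<in> J" "w = c \<otimes> z \<otimes> d"
      by (auto simp: mem_double_coset_iff)
    then have "w = (c \<otimes> a) \<otimes> g \<otimes> (b \<otimes> d)"
      using ab(3) ac g subgroup.mem_carrier[OF J] by (simp add: m_assoc)
    then show "w \<in> double_coset G J g"
      unfolding mem_double_coset_iff using J ab cd by (blast intro: subgroup.m_closed)
  next
    fix w assume "w \<in> double_coset G J g"
    then obtain c d where cd: "c \<in> J" "d \<in> J" "w = c \<otimes> g \<otimes> d"
      by (auto simp: mem_double_coset_iff)
    then have "w = (c \<otimes> inv a) \<otimes> z \<otimes> (inv b \<otimes> d)"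
      using ab(3) ac g subgroup.mem_carrier[OF J] by (simp add: m_assoc)
    then show "w \<in> double_coset G J z"
      unfolding mem_double_coset_iff using J ab cd by (blast intro: subgroup.m_closed subgroup.m_inv_closed)
  qed
qed

lemma double_coset_subset_carrier:
  assumes "subgroup J G" "g \<in> carrier G"
  shows "double_coset G J g \<subseteq> carrier G"
  using double_coset_subset[OF assms(1) subgroup_self] assms subgroup.subset by blast

lemma double_coset_inv:
  assumes J: "subgroup J G" and g: "g \<in> carrier G"
  shows "double_coset G J (inv g) = (\<lambda>z. inv z) ` double_coset G J g"
proof (intro equalityI subsetI)
  fix z assume "z \<in> double_coset G J (inv g)"
  then obtain a b where ab: "a \<in> J" "b \<in> J" "z = a \<otimes> inv g \<otimes> b"
    by (auto simp: mem_double_coset_iff)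
  then have "z = inv (inv b \<otimes> g \<otimes> inv a)"
    using g subgroup.mem_carrier[OF J] by (simp add: inv_mult_group m_assoc)
  moreover have "inv b \<otimes> g \<otimes> inv a \<in> double_coset G J g"
    using ab J by (auto simp: mem_double_coset_iff intro: subgroup.m_inv_closed)
  ultimately show "z \<in> (\<lambda>z. inv z) ` double_coset G J g"
    by blast
next
  fix z assume "z \<in> (\<lambda>z. inv z) ` double_coset G J g"
  then obtain a b where ab: "a \<in> J" "b \<in> J" "z = inv (a \<otimes> g \<otimes> b)"
    by (auto simp: mem_double_coset_iff)
  then have "z = inv b \<otimes> inv g \<otimes> inv a"
    using g subgroup.mem_carrier[OF J] by (simp add: inv_mult_group m_assoc)
  then show "z \<in> double_coset G J (inv g)"
    using ab J by (auto simp: mem_double_coset_iff intro: subgroup.m_inv_closed)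
qed

lemma double_coset_inv_eq_iff:
  assumes "subgroup J G" "a \<in> carrier G" "g \<in> carrier G"
  shows "double_coset G J (inv a) = double_coset G J (inv g) \<longleftrightarrow>
    double_coset G J a = double_coset G J g"
  using assms double_coset_subset_carrier[OF assms(1)]
  by (simp add: double_coset_inv inj_on_image_eq_iff[OF inv_inj])

lemma double_coset_inv_eq_if_square_mem:
  assumes J: "subgroup J G" and x: "x \<in> carrier G" and "x \<otimes> x \<in> J"
  shows "double_coset G J (inv x) = double_coset G J x"
proof -
  have "inv x = inv (x \<otimes> x) \<otimes> x \<otimes> \<one>"
    using x by (simp add: inv_mult_group m_assoc)
  then have "inv x \<in> double_coset G J x"
    unfolding mem_double_coset_iff using assms subgroup.one_closed[OF J]
    by (blast intro: subgroup.m_inv_closed)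
  then show ?thesis
    by (rule double_coset_eq_if_mem[OF J x])
qed

lemma square_mem_in_self_inverse_double_coset:
  assumes J: "subgroup J G" and g: "g \<in> carrier G"
    and "double_coset G J g = double_coset G J (inv g)"
  obtains x where "x \<in> double_coset G J g" "x \<otimes> x \<in> J"
proof -
  have "inv g \<in> double_coset G J g"
    using assms(3) double_coset_self[OF J inv_closed[OF g]] by simp
  then obtain l1 l2 where l: "l1 \<in> J" "l2 \<in> J" "inv g = l1 \<otimes> g \<otimes> l2"
    by (auto simp: mem_double_coset_iff)
  have [simp]: "l1 \<in> carrier G" "l2 \<in> carrier G"
    using l subgroup.mem_carrier[OF J] by auto
  \<comment> \<open>\<open>g l2 = l1\<inverse> g\<inverse>\<close>, so \<open>(l2 g)\<^sup>2 = l2 l1\<inverse>\<close>\<close>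
  have "(l2 \<otimes> g) \<otimes> (l2 \<otimes> g) = l2 \<otimes> inv l1 \<otimes> (l1 \<otimes> g \<otimes> l2) \<otimes> g"
    using g by (simp add: m_assoc)
  also have "\<dots> = l2 \<otimes> inv l1"
    using g by (simp add: l(3)[symmetric] m_assoc)
  also have "\<dots> \<in> J"
    using J l by (simp add: subgroup.m_closed subgroup.m_inv_closed)
  finally have "(l2 \<otimes> g) \<otimes> (l2 \<otimes> g) \<in> J" .
  moreover have "l2 \<otimes> g = l2 \<otimes> g \<otimes> \<one>"
    using g by simp
  then have "l2 \<otimes> g \<in> double_coset G J g"
    unfolding mem_double_coset_iff using l(2) subgroup.one_closed[OF J] by blast
  ultimately show thesis
    using that by blast
qed

lemma r_coset_subset_double_coset_iff:
  assumes J: "subgroup J G" and a: "a \<in> carrier G" and g: "g \<in> carrier G"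
  shows "J #> a \<subseteq> double_coset G J g \<longleftrightarrow> double_coset G J a = double_coset G J g"
proof
  assume "J #> a \<subseteq> double_coset G J g"
  then show "double_coset G J a = double_coset G J g"
    using double_coset_eq_if_mem[OF J g] rcos_self[OF a J] by blast
next
  have "J #> a \<subseteq> double_coset G J a"
    using a J subgroup.one_closed[OF J] subgroup.mem_carrier[OF J]
    by (force simp: r_coset_def mem_double_coset_iff)
  then show "double_coset G J a = double_coset G J g \<Longrightarrow> J #> a \<subseteq> double_coset G J g"
    by simp
qed

lemma r_coset_subset_double_coset_swap:
  assumes L: "subgroup L G" and "a \<in> carrier G" "b \<in> carrier G" "g \<in> carrier G"
    and "double_coset G L b = double_coset G L (inv a)"
  shows "L #> a \<subseteq> double_coset G L g \<longleftrightarrow> L #> b \<subseteq> double_coset G L (inv g)"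
  using assms by (simp add: r_coset_subset_double_coset_iff double_coset_inv_eq_iff)

lemma inv_pair_if_mem_double_coset_inv:
  assumes J: "subgroup J G" and a: "a \<in> carrier G" and b: "b \<in> carrier G"
    and "b \<in> double_coset G J (inv a)"
  shows "\<exists>t\<in>J #> a. inv t \<in> J #> b"
proof -
  obtain c d where cd: "c \<in> J" "d \<in> J" "b = c \<otimes> inv a \<otimes> d"
    using assms(4) by (auto simp: mem_double_coset_iff)
  have [simp]: "c \<in> carrier G" "d \<in> carrier G"
    using cd subgroup.mem_carrier[OF J] by auto
  have "inv d \<otimes> a \<in> J #> a"
    using J a cd by (simp add: r_coset_mem_iff m_assoc subgroup.m_inv_closed)
  moreover have "inv (inv d \<otimes> a) \<in> J #> b"
    using J a b cd by (simp add: r_coset_mem_iff m_assoc inv_mult_group subgroup.m_inv_closed)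
  ultimately show ?thesis
    by blast
qed

lemma involution_in_r_coset_if_in_double_coset:
  assumes J: "subgroup J G" and a: "a \<in> carrier G"
    and "y \<in> double_coset G J a" "y \<otimes> y = \<one>"
  shows "\<exists>z\<in>J #> a. z \<otimes> z = \<one>"
proof -
  obtain c d where cd: "c \<in> J" "d \<in> J" "y = c \<otimes> a \<otimes> d"
    using assms(3) by (auto simp: mem_double_coset_iff)
  have [simp]: "c \<in> carrier G" "d \<in> carrier G"
    using cd subgroup.mem_carrier[OF J] by auto
  \<comment> \<open>the conjugate \<open>d y d\<inverse>\<close> of \<open>y\<close> lies in \<open>J a\<close>\<close>
  have "d \<otimes> c \<otimes> a \<in> J #> a"
    using J a cd by (simp add: r_coset_mem_iff m_assoc subgroup.m_closed)
  moreover have "(d \<otimes> c \<otimes> a) \<otimes> (d \<otimes> c \<otimes> a) = d \<otimes> (y \<otimes> y) \<otimes> inv d"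
    using a cd(3) by (simp add: m_assoc)
  ultimately show ?thesis
    using assms(4) by auto
qed

lemma r_cosets_in_double_coset:
  assumes J: "subgroup J G" and C: "subgroup C G" and "J \<subseteq> C" "x \<in> C"
  shows "{A \<in> (\<lambda>c. J #> c) ` C. A \<subseteq> double_coset G J x} = (\<lambda>l. J #> (x \<otimes> l)) ` J"
proof -
  have x: "x \<in> carrier G"
    using subgroup.mem_carrier[OF C assms(4)] .
  show ?thesis
  proof (intro equalityI subsetI)
    fix A assume "A \<in> {A \<in> (\<lambda>c. J #> c) ` C. A \<subseteq> double_coset G J x}"
    then obtain c where c: "c \<in> C" "A = J #> c" "J #> c \<subseteq> double_coset G J x"
      by blast
    have "c \<in> double_coset G J x"
      using c(1,3) rcos_self[of c J] subgroup.mem_carrier[OF C] J by blast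
    then obtain l1 l2 where l: "l1 \<in> J" "l2 \<in> J" "c = l1 \<otimes> x \<otimes> l2"
      by (auto simp: mem_double_coset_iff)
    moreover have "l1 \<in> carrier G" "l2 \<in> carrier G"
      using l(1,2) subgroup.mem_carrier[OF J] by auto
    ultimately have "c \<otimes> inv (x \<otimes> l2) = l1"
      using x by (simp add: m_assoc inv_mult_group)
    then have "J #> c = J #> (x \<otimes> l2)"
      using r_coset_eq_iff[OF J] l \<open>l2 \<in> carrier G\<close> c(1) subgroup.mem_carrier[OF C] x by simp
    then show "A \<in> (\<lambda>l. J #> (x \<otimes> l)) ` J"
      using c(2) l(2) by blast
  next
    fix A assume "A \<in> (\<lambda>l. J #> (x \<otimes> l)) ` J"
    then obtain l where l: "l \<in> J" "A = J #> (x \<otimes> l)"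
      by blast
    have xl: "x \<otimes> l \<in> C"
      using subgroup.m_closed[OF C assms(4)] l(1) assms(3) by blast
    have "l \<in> carrier G"
      using l(1) subgroup.mem_carrier[OF J] by blast
    then have "x \<otimes> l = \<one> \<otimes> x \<otimes> l"
      using x by simp
    then have "x \<otimes> l \<in> double_coset G J x"
      unfolding mem_double_coset_iff using l(1) subgroup.one_closed[OF J] by blast
    then have "double_coset G J (x \<otimes> l) = double_coset G J x"
      by (rule double_coset_eq_if_mem[OF J x])
    then have "A \<subseteq> double_coset G J x"
      using l r_coset_subset_double_coset_iff[OF J _ x] xl subgroup.mem_carrier[OF C] by blast
    then show "A \<in> {A \<in> (\<lambda>c. J #> c) ` C. A \<subseteq> double_coset G J x}"
      using l xl by blast
  qed
qed

lemma r_cosets_in_double_coset_outside: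
  assumes L: "subgroup L G" and K: "subgroup K G" and "L \<subseteq> K" and g: "g \<in> carrier G" "g \<notin> K"
  shows "{A \<in> (\<lambda>k. L #> k) ` K. A \<subseteq> double_coset G L g} = {}"
proof -
  have "\<not> L #> k \<subseteq> double_coset G L g" if k: "k \<in> K" for k
  proof
    assume "L #> k \<subseteq> double_coset G L g"
    then have "double_coset G L g = double_coset G L k"
      using r_coset_subset_double_coset_iff[OF L _ g(1)] k subgroup.mem_carrier[OF K] by metis
    then show False
      using double_coset_self[OF L g(1)] double_coset_subset[OF L K assms(3) k] g(2) by blast
  qed
  then show ?thesis
    by blast
qed

lemma subgroup_inter_conj:
  assumes J: "subgroup J G" and x: "x \<in> carrier G"
  shows "subgroup (inter_conj G J x) G"
proof (rule subgroupI)
  show "inter_conj G J x \<subseteq> carrier G"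
    using subgroup.subset[OF J] by (auto simp: inter_conj_def)
  show "inter_conj G J x \<noteq> {}"
    using J x by (auto simp: inter_conj_def intro!: exI[of _ \<one>] subgroup.one_closed)
next
  fix a b assume "a \<in> inter_conj G J x" "b \<in> inter_conj G J x"
  then have ab: "a \<in> J" "b \<in> J" "x \<otimes> a \<otimes> inv x \<in> J" "x \<otimes> b \<otimes> inv x \<in> J"
    and [simp]: "a \<in> carrier G" "b \<in> carrier G"
    using subgroup.mem_carrier[OF J] by (auto simp: inter_conj_def)
  have "x \<otimes> inv a \<otimes> inv x = inv (x \<otimes> a \<otimes> inv x)"
    using x by (simp add: inv_mult_group m_assoc)
  then show "inv a \<in> inter_conj G J x"
    using J ab by (simp add: inter_conj_def subgroup.m_inv_closed)
  have "x \<otimes> (a \<otimes> b) \<otimes> inv x = (x \<otimes> a \<otimes> inv x) \<otimes> (x \<otimes> b \<otimes> inv x)"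
    using x by (simp add: m_assoc)
  then show "a \<otimes> b \<in> inter_conj G J x"
    using J ab by (simp add: inter_conj_def subgroup.m_closed)
qed

lemma inter_conj_conj_closed:
  assumes J: "subgroup J G" and x: "x \<in> carrier G" "x \<otimes> x \<in> J" and n: "n \<in> inter_conj G J x"
  shows "inv x \<otimes> n \<otimes> x \<in> inter_conj G J x"
proof -
  have nJ: "n \<in> J" "x \<otimes> n \<otimes> inv x \<in> J" and [simp]: "n \<in> carrier G"
    using n subgroup.mem_carrier[OF J] by (auto simp: inter_conj_def)
  have "inv x \<otimes> n \<otimes> x = inv (x \<otimes> x) \<otimes> (x \<otimes> n \<otimes> inv x) \<otimes> (x \<otimes> x)"
    using x by (simp add: m_assoc inv_mult_group)
  then have "inv x \<otimes> n \<otimes> x \<in> J"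
    using J x nJ by (simp add: subgroup.m_closed subgroup.m_inv_closed)
  moreover have "x \<otimes> (inv x \<otimes> n \<otimes> x) \<otimes> inv x = n"
    using x by (simp add: m_assoc)
  ultimately show ?thesis
    using nJ by (simp add: inter_conj_def)
qed

lemma inv_square_mem_inter_conj:
  assumes "subgroup J G" "x \<in> carrier G" "x \<otimes> x \<in> J"
  shows "inv (x \<otimes> x) \<in> inter_conj G J x"
proof -
  have "x \<otimes> inv (x \<otimes> x) \<otimes> inv x = inv (x \<otimes> x)"
    using assms(2) by (simp add: m_assoc inv_mult_group)
  then show ?thesis
    using subgroup.m_inv_closed[OF assms(1,3)] by (simp add: inter_conj_def)
qed

lemma card_r_cosets_in_double_coset:
  assumes J: "subgroup J G" and x: "x \<in> carrier G" and "finite J"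
  shows "card ((\<lambda>l. J #> (x \<otimes> l)) ` J) * card (inter_conj G J x) = card J"
proof -
  let ?N = "inter_conj G J x"
  have "card ((\<lambda>l. J #> (x \<otimes> l)) ` J) = card ((\<lambda>l. ?N #> l) ` J)"
  proof (rule card_image_eq_if_same_kernel)
    fix a b assume ab: "a \<in> J" "b \<in> J"
    then have [simp]: "a \<in> carrier G" "b \<in> carrier G"
      using subgroup.mem_carrier[OF J] by auto
    have "x \<otimes> a \<otimes> inv (x \<otimes> b) = x \<otimes> (a \<otimes> inv b) \<otimes> inv x"
      using x by (simp add: m_assoc inv_mult_group)
    then show "J #> (x \<otimes> a) = J #> (x \<otimes> b) \<longleftrightarrow> ?N #> a = ?N #> b"
      using J x ab subgroup_inter_conj[OF J x]
      by (simp add: r_coset_eq_iff inter_conj_def subgroup.m_closed subgroup.m_inv_closed)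
  qed
  moreover have "card ((\<lambda>l. ?N #> l) ` J) * card ?N = card J"
    using assms subgroup_inter_conj[OF J x] by (intro lagrange_within) (auto simp: inter_conj_def)
  ultimately show ?thesis
    by simp
qed

lemma card_inter_conj_inv:
  assumes J: "subgroup J G" and g: "g \<in> carrier G"
  shows "card (inter_conj G J (inv g)) = card (inter_conj G J g)"
proof -
  have conj: "inv g \<otimes> (g \<otimes> n \<otimes> inv g) \<otimes> g = n" "g \<otimes> (inv g \<otimes> n \<otimes> g) \<otimes> inv g = n"
    if "n \<in> carrier G" for n
    using that g by (simp_all add: m_assoc)
  have "inter_conj G J (inv g) = (\<lambda>n. g \<otimes> n \<otimes> inv g) ` inter_conj G J g"
  proof (intro equalityI subsetI)
    fix m assume "m \<in> inter_conj G J (inv g)"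
    then have m: "m \<in> J" "inv g \<otimes> m \<otimes> g \<in> J" "m \<in> carrier G"
      using g subgroup.mem_carrier[OF J] by (auto simp: inter_conj_def)
    then have "inv g \<otimes> m \<otimes> g \<in> inter_conj G J g"
      using conj(2) by (simp add: inter_conj_def)
    then show "m \<in> (\<lambda>n. g \<otimes> n \<otimes> inv g) ` inter_conj G J g"
      using conj(2)[OF m(3)] by (metis image_eqI)
  next
    fix m assume "m \<in> (\<lambda>n. g \<otimes> n \<otimes> inv g) ` inter_conj G J g"
    then obtain n where "n \<in> J" "g \<otimes> n \<otimes> inv g \<in> J" "m = g \<otimes> n \<otimes> inv g"
      by (auto simp: inter_conj_def)
    then show "m \<in> inter_conj G J (inv g)"
      using g conj(1) subgroup.mem_carrier[OF J] by (simp add: inter_conj_def)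
  qed
  moreover have "inj_on (\<lambda>n. g \<otimes> n \<otimes> inv g) (inter_conj G J g)"
    using g subgroup.mem_carrier[OF J] by (intro inj_onI) (auto simp: inter_conj_def)
  ultimately show ?thesis
    by (simp add: card_image)
qed

lemma card_r_cosets_in_double_coset_inv:
  assumes J: "subgroup J G" and x: "x \<in> carrier G" and "finite J"
  shows "card ((\<lambda>l. J #> (inv x \<otimes> l)) ` J) = card ((\<lambda>l. J #> (x \<otimes> l)) ` J)"
proof -
  have "\<one> \<in> inter_conj G J x"
    using J x by (simp add: inter_conj_def subgroup.one_closed)
  moreover have "finite (inter_conj G J x)"
    using \<open>finite J\<close> by (simp add: inter_conj_def)
  ultimately have "card (inter_conj G J x) \<noteq> 0"
    by auto
  then show ?thesis
    using card_r_cosets_in_double_coset[OF J x] card_r_cosets_in_double_coset[OF J inv_closed[OF x]]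
      card_inter_conj_inv[OF J x] \<open>finite J\<close> by (metis mult_right_cancel)
qed

end

section \<open>Perfect codes as inverse-closed transversals\<close>

definition inv_closed_rtransversal :: "('a, 'b) monoid_scheme \<Rightarrow> 'a set \<Rightarrow> 'a set \<Rightarrow> 'a set \<Rightarrow> bool" where
  "inv_closed_rtransversal G H C T \<longleftrightarrow>
     T \<subseteq> C \<and> (\<forall>t\<in>T. inv\<^bsub>G\<^esub> t \<in> T) \<and> (\<forall>g\<in>C. \<exists>!t. t \<in> T \<and> t \<in> H #>\<^bsub>G\<^esub> g)"

context group
begin

lemma subset_set_mult_left:
  assumes "subgroup H G" "K \<subseteq> carrier G"
  shows "K \<subseteq> H <#> K"
  using assms subgroup.one_closed[OF assms(1)] by (force simp: set_mult_def)

lemma subset_set_mult_right: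
  assumes "subgroup K G" "H \<subseteq> carrier G"
  shows "H \<subseteq> H <#> K"
  using assms subgroup.one_closed[OF assms(1)] by (force simp: set_mult_def)

lemma cay_adj_iff:
  assumes "C \<subseteq> carrier G" "S \<subseteq> carrier G" "\<forall>s\<in>S. inv s \<in> S"
  shows "cay_adj (G\<lparr>carrier := C\<rparr>) S x y \<longleftrightarrow> x \<in> C \<and> y \<in> C \<and> y \<otimes> inv x \<in> S"
proof (cases "x \<in> C \<and> y \<in> C")
  case True
  then have [simp]: "x \<in> carrier G" "y \<in> carrier G"
    using assms(1) by auto
  have "(\<exists>s\<in>S. y = s \<otimes> x \<or> x = s \<otimes> y) \<longleftrightarrow> y \<otimes> inv x \<in> S"
  proof
    assume "\<exists>s\<in>S. y = s \<otimes> x \<or> x = s \<otimes> y"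
    then obtain s where s: "s \<in> S" "y = s \<otimes> x \<or> x = s \<otimes> y"
      by blast
    then have "s \<in> carrier G"
      using assms(2) by blast
    then have "y \<otimes> inv x = s \<or> y \<otimes> inv x = inv s"
      using s(2) by (auto simp: m_assoc inv_mult_group)
    then show "y \<otimes> inv x \<in> S"
      using s(1) assms(3) by auto
  next
    assume "y \<otimes> inv x \<in> S"
    moreover have "y = (y \<otimes> inv x) \<otimes> x"
      by (simp add: m_assoc)
    ultimately show "\<exists>s\<in>S. y = s \<otimes> x \<or> x = s \<otimes> y"
      by blast
  qed
  then show ?thesis
    using True by (simp add: cay_adj_def)
qed (auto simp: cay_adj_def)

lemma cay_perfect_code_subgroup_iff:
  assumes H: "subgroup H G" and "H \<subseteq> C" "C \<subseteq> carrier G" "S \<subseteq> carrier G" "\<forall>s\<in>S. inv s \<in> S"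
  shows "cay_perfect_code (G\<lparr>carrier := C\<rparr>) S H \<longleftrightarrow>
    S \<inter> H = {} \<and> (\<forall>v\<in>C - H. \<exists>!s. s \<in> S \<and> s \<otimes> v \<in> H)"
proof -
  have adj: "cay_adj (G\<lparr>carrier := C\<rparr>) S x y \<longleftrightarrow> x \<in> C \<and> y \<in> C \<and> y \<otimes> inv x \<in> S" for x y
    by (rule cay_adj_iff[OF assms(3-5)])
  have Hc: "H \<subseteq> carrier G"
    by (rule subgroup.subset[OF H])
  have indep: "(\<forall>x\<in>H. \<forall>y\<in>H. \<not> cay_adj (G\<lparr>carrier := C\<rparr>) S x y) \<longleftrightarrow> S \<inter> H = {}"
  proof
    assume "\<forall>x\<in>H. \<forall>y\<in>H. \<not> cay_adj (G\<lparr>carrier := C\<rparr>) S x y"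
    then have "s \<otimes> inv \<one> \<notin> S" if "s \<in> H" for s
      using that subgroup.one_closed[OF H] assms(2) adj by blast
    then show "S \<inter> H = {}"
      using Hc by (metis disjoint_iff inv_one r_one subsetD)
  next
    assume "S \<inter> H = {}"
    moreover have "y \<otimes> inv x \<in> H" if "x \<in> H" "y \<in> H" for x y
      using that H by (simp add: subgroup.m_closed subgroup.m_inv_closed)
    ultimately show "\<forall>x\<in>H. \<forall>y\<in>H. \<not> cay_adj (G\<lparr>carrier := C\<rparr>) S x y"
      using adj by blast
  qed
  have unique: "(\<exists>!c. c \<in> H \<and> cay_adj (G\<lparr>carrier := C\<rparr>) S v c) \<longleftrightarrow> (\<exists>!s. s \<in> S \<and> s \<otimes> v \<in> H)"
    if v: "v \<in> C" for v
  proof (rule ex1_iff_if_bij_betw)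
    have [simp]: "v \<in> carrier G"
      using v assms(3) by blast
    show "bij_betw (\<lambda>c. c \<otimes> inv v) {c. c \<in> H \<and> cay_adj (G\<lparr>carrier := C\<rparr>) S v c}
        {s. s \<in> S \<and> s \<otimes> v \<in> H}"
      by (rule bij_betw_byWitness[where f' = "\<lambda>s. s \<otimes> v"])
        (use Hc assms(2,4) v in \<open>auto simp: adj m_assoc\<close>)
  qed
  show ?thesis
    unfolding cay_perfect_code_def using assms(2) indep unique by auto
qed

lemma inv_closed_rtransversal_iff:
  assumes H: "subgroup H G" and C: "subgroup C G"
  shows "inv_closed_rtransversal G H C T \<longleftrightarrow>
    T \<subseteq> C \<and> (\<forall>t\<in>T. inv t \<in> T) \<and> (\<forall>g\<in>C. \<exists>!t. t \<in> T \<and> t \<otimes> inv g \<in> H)"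
proof (cases "T \<subseteq> C")
  case True
  then have "t \<in> T \<and> t \<in> H #> g \<longleftrightarrow> t \<in> T \<and> t \<otimes> inv g \<in> H" if "g \<in> C" for t g
    using that r_coset_mem_iff[OF H] subgroup.mem_carrier[OF C] by blast
  then show ?thesis
    unfolding inv_closed_rtransversal_def by simp
qed (simp add: inv_closed_rtransversal_def)

lemma mem_subgroup_if_mult_mem:
  assumes H: "subgroup H G" and "x \<otimes> y \<in> H" "y \<in> H" "x \<in> carrier G" "y \<in> carrier G"
  shows "x \<in> H"
proof -
  have "(x \<otimes> y) \<otimes> inv y \<in> H"
    by (rule subgroup.m_closed[OF H assms(2) subgroup.m_inv_closed[OF H assms(3)]])
  then show ?thesis
    using assms(4,5) by (simp add: m_assoc)
qed

text \<open>Dropping the representative of \<open>H\<close> from an inverse-closed transversal leaves a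
  connection set of a Cayley graph in which \<open>H\<close> is a perfect code; adding \<open>\<one>\<close> reverses this.\<close>

lemma inv_closed_rtransversal_Diff:
  assumes H: "subgroup H G" and C: "subgroup C G" and T: "inv_closed_rtransversal G H C T"
  shows "T - H \<subseteq> C - {\<one>}" "\<forall>s\<in>T - H. inv s \<in> T - H"
    and "\<forall>v\<in>C - H. \<exists>!s. s \<in> T - H \<and> s \<otimes> v \<in> H"
proof -
  have TC: "T \<subseteq> C" and Tinv: "\<forall>t\<in>T. inv t \<in> T"
    and rep: "\<forall>g\<in>C. \<exists>!t. t \<in> T \<and> t \<otimes> inv g \<in> H"
    using T inv_closed_rtransversal_iff[OF H C] by auto
  have Tc: "t \<in> carrier G" if "t \<in> T" for t
    using that TC subgroup.mem_carrier[OF C] by blast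
  show "T - H \<subseteq> C - {\<one>}" "\<forall>s\<in>T - H. inv s \<in> T - H"
    using TC Tinv Tc subgroup.one_closed[OF H] subgroup.m_inv_closed[OF H] by fastforce+
  show "\<forall>v\<in>C - H. \<exists>!s. s \<in> T - H \<and> s \<otimes> v \<in> H"
  proof
    fix v assume v: "v \<in> C - H"
    then have vc: "v \<in> carrier G" "inv v \<in> C"
      using subgroup.mem_carrier[OF C] subgroup.m_inv_closed[OF C] by auto
    have "\<exists>!t. t \<in> T \<and> t \<otimes> inv (inv v) \<in> H"
      using rep vc(2) by blast
    then obtain t where t: "t \<in> T" "t \<otimes> v \<in> H" and tu: "\<And>t'. t' \<in> T \<Longrightarrow> t' \<otimes> v \<in> H \<Longrightarrow> t' = t"
      using vc(1) by auto
    have "t \<notin> H"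
    proof
      assume "t \<in> H"
      then have "inv t \<otimes> (t \<otimes> v) \<in> H"
        by (rule subgroup.m_closed[OF H subgroup.m_inv_closed[OF H] t(2)])
      then show False
        using v vc(1) Tc[OF t(1)] by simp
    qed
    then show "\<exists>!s. s \<in> T - H \<and> s \<otimes> v \<in> H"
      using t tu by blast
  qed
qed

lemma inv_closed_rtransversal_insert_one:
  assumes H: "subgroup H G" and C: "subgroup C G"
    and S: "S \<subseteq> C - {\<one>}" "\<forall>s\<in>S. inv s \<in> S" "S \<inter> H = {}"
    and rep: "\<forall>v\<in>C - H. \<exists>!s. s \<in> S \<and> s \<otimes> v \<in> H"
  shows "inv_closed_rtransversal G H C (insert \<one> S)"
proof -
  have rep': "\<exists>!t. t \<in> insert \<one> S \<and> t \<otimes> inv g \<in> H" if g: "g \<in> C" for g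
  proof -
    have gc: "g \<in> carrier G"
      using g subgroup.mem_carrier[OF C] by blast
    show ?thesis
    proof (cases "g \<in> H")
      case True
      have "s \<otimes> inv g \<notin> H" if "s \<in> S" for s
        using that S(1,3) True gc mem_subgroup_if_mult_mem[OF H, of s "inv g"]
          subgroup.mem_carrier[OF C] subgroup.m_inv_closed[OF H] by blast
      then show ?thesis
        using True H gc by (auto intro!: ex1I[of _ \<one>] subgroup.m_inv_closed)
    next
      case False
      then have "inv g \<notin> H"
        using gc subgroup.m_inv_closed[OF H] inv_inv by metis
      then have "\<exists>!s. s \<in> S \<and> s \<otimes> inv g \<in> H"
        using rep g subgroup.m_inv_closed[OF C] by blast
      then show ?thesis
        using \<open>inv g \<notin> H\<close> gc by auto
    qed
  qed
  moreover have "insert \<one> S \<subseteq> C" "\<forall>t\<in>insert \<one> S. inv t \<in> insert \<one> S"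
    using S(1,2) subgroup.one_closed[OF C] by auto
  ultimately show ?thesis
    by (simp add: inv_closed_rtransversal_iff[OF H C])
qed

lemma ex_inv_closed_rtransversal_iff:
  assumes H: "subgroup H G" and C: "subgroup C G"
  shows "(\<exists>T. inv_closed_rtransversal G H C T) \<longleftrightarrow>
    (\<exists>S. S \<subseteq> C - {\<one>} \<and> (\<forall>s\<in>S. inv s \<in> S) \<and> S \<inter> H = {} \<and>
      (\<forall>v\<in>C - H. \<exists>!s. s \<in> S \<and> s \<otimes> v \<in> H))"
proof
  assume "\<exists>T. inv_closed_rtransversal G H C T"
  then obtain T where T: "inv_closed_rtransversal G H C T" ..
  have "(T - H) \<inter> H = {}"
    by blast
  then show "\<exists>S. S \<subseteq> C - {\<one>} \<and> (\<forall>s\<in>S. inv s \<in> S) \<and> S \<inter> H = {} \<and>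
      (\<forall>v\<in>C - H. \<exists>!s. s \<in> S \<and> s \<otimes> v \<in> H)"
    using inv_closed_rtransversal_Diff[OF H C T] by (intro exI[of _ "T - H"] conjI) assumption+
next
  assume "\<exists>S. S \<subseteq> C - {\<one>} \<and> (\<forall>s\<in>S. inv s \<in> S) \<and> S \<inter> H = {} \<and>
      (\<forall>v\<in>C - H. \<exists>!s. s \<in> S \<and> s \<otimes> v \<in> H)"
  then obtain S where "S \<subseteq> C - {\<one>}" "\<forall>s\<in>S. inv s \<in> S" "S \<inter> H = {}"
    "\<forall>v\<in>C - H. \<exists>!s. s \<in> S \<and> s \<otimes> v \<in> H"
    by blast
  then show "\<exists>T. inv_closed_rtransversal G H C T"
    using inv_closed_rtransversal_insert_one[OF H C] by blast
qed

lemma subgroup_perfect_code_iff_rtransversal: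
  assumes C: "subgroup C G"
  shows "subgroup_perfect_code H (G\<lparr>carrier := C\<rparr>) \<longleftrightarrow>
    subgroup H G \<and> H \<subseteq> C \<and> (\<exists>T. inv_closed_rtransversal G H C T)"
proof -
  have Cc: "C \<subseteq> carrier G"
    by (rule subgroup.subset[OF C])
  have sub: "subgroup H (G\<lparr>carrier := C\<rparr>) \<longleftrightarrow> subgroup H G \<and> H \<subseteq> C"
    using incl_subgroup[OF C] subgroup_incl[OF _ C] subgroup.subset[of H "G\<lparr>carrier := C\<rparr>"]
    by auto
  have S_iff: "S \<subseteq> C - {\<one>} \<and> (\<forall>s\<in>S. inv\<^bsub>G\<lparr>carrier := C\<rparr>\<^esub> s \<in> S) \<and>
          cay_perfect_code (G\<lparr>carrier := C\<rparr>) S H \<longleftrightarrow>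
        S \<subseteq> C - {\<one>} \<and> (\<forall>s\<in>S. inv s \<in> S) \<and> S \<inter> H = {} \<and>
          (\<forall>v\<in>C - H. \<exists>!s. s \<in> S \<and> s \<otimes> v \<in> H)"
    if "subgroup H G" "H \<subseteq> C" for S
  proof (cases "S \<subseteq> C - {\<one>}")
    case True
    then have "(\<forall>s\<in>S. inv\<^bsub>G\<lparr>carrier := C\<rparr>\<^esub> s \<in> S) \<longleftrightarrow> (\<forall>s\<in>S. inv s \<in> S)"
      using m_inv_consistent[OF C] by (metis DiffD1 subsetD)
    moreover have "S \<subseteq> carrier G"
      using True Cc by blast
    ultimately show ?thesis
      using True cay_perfect_code_subgroup_iff[OF that Cc, of S] by blast
  qed simp
  have "(\<exists>S. S \<subseteq> carrier (G\<lparr>carrier := C\<rparr>) - {\<one>\<^bsub>G\<lparr>carrier := C\<rparr>\<^esub>} \<and>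
          (\<forall>s\<in>S. inv\<^bsub>G\<lparr>carrier := C\<rparr>\<^esub> s \<in> S) \<and> cay_perfect_code (G\<lparr>carrier := C\<rparr>) S H) \<longleftrightarrow>
        (\<exists>T. inv_closed_rtransversal G H C T)"
    if "subgroup H G" "H \<subseteq> C"
    using S_iff[OF that] ex_inv_closed_rtransversal_iff[OF that(1) C] by simp
  then show ?thesis
    unfolding subgroup_perfect_code_def sub by blast
qed

lemma inv_closed_rtransversal_set_mult:
  assumes H: "subgroup H G" and K: "subgroup K G"
    and T: "inv_closed_rtransversal G (H \<inter> K) K T"
  shows "inv_closed_rtransversal G H (H <#> K) T"
proof -
  have Kc: "K \<subseteq> carrier G"
    by (rule subgroup.subset[OF K])
  have TK: "T \<subseteq> K"
    using T by (simp add: inv_closed_rtransversal_def)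
  have "t \<in> H #> (h \<otimes> k) \<longleftrightarrow> t \<in> (H \<inter> K) #> k" if "t \<in> K" "h \<in> H" "k \<in> K" for t h k
  proof -
    have [simp]: "t \<in> carrier G" "h \<in> carrier G" "k \<in> carrier G"
      using that Kc subgroup.mem_carrier[OF H] by auto
    have "H #> (h \<otimes> k) = H #> k"
      using H that by (simp add: coset_mult_assoc[symmetric] coset_join2 subgroup.subset)
    moreover have "t \<otimes> inv k \<in> K"
      using that K by (simp add: subgroup.m_closed subgroup.m_inv_closed)
    ultimately show ?thesis
      using H K by (simp add: r_coset_mem_iff subgroups_Inter_pair)
  qed
  then show ?thesis
    using T TK subset_set_mult_left[OF H Kc]
    by (auto simp: inv_closed_rtransversal_def set_mult_def) (metis subsetD)+
qed

lemma card_rtransversal_Int_double_coset: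
  assumes H: "subgroup H G" and C: "subgroup C G" and "H \<subseteq> C" and x: "x \<in> C"
    and T: "inv_closed_rtransversal G H C T"
  shows "card (T \<inter> double_coset G H x) = card ((\<lambda>h. H #> (x \<otimes> h)) ` H)"
proof -
  let ?D = "double_coset G H x"
  have Cc: "C \<subseteq> carrier G"
    by (rule subgroup.subset[OF C])
  have TC: "T \<subseteq> C" and rep: "\<forall>g\<in>C. \<exists>!t. t \<in> T \<and> t \<in> H #> g"
    using T by (auto simp: inv_closed_rtransversal_def)
  have xc: "x \<in> carrier G"
    using x Cc by blast
  have "inj_on (\<lambda>t. H #> t) (T \<inter> ?D)"
  proof (rule inj_onI)
    fix t1 t2 assume t: "t1 \<in> T \<inter> ?D" "t2 \<in> T \<inter> ?D" and eq: "H #> t1 = H #> t2"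
    then have "t1 \<in> H #> t2" "t2 \<in> H #> t2" "t2 \<in> C"
      using TC Cc rcos_self[OF _ H] by auto
    then show "t1 = t2"
      using rep t by blast
  qed
  moreover have "(\<lambda>t. H #> t) ` (T \<inter> ?D) = {A \<in> (\<lambda>c. H #> c) ` C. A \<subseteq> ?D}"
  proof (intro equalityI subsetI)
    fix A assume "A \<in> (\<lambda>t. H #> t) ` (T \<inter> ?D)"
    then obtain t where t: "t \<in> T" "t \<in> ?D" "A = H #> t"
      by blast
    then have "H #> t \<subseteq> ?D"
      using r_coset_subset_double_coset_iff[OF H _ xc] double_coset_eq_if_mem[OF H xc] TC Cc
      by blast
    then show "A \<in> {A \<in> (\<lambda>c. H #> c) ` C. A \<subseteq> ?D}"
      using t TC by blast
  next
    fix A assume "A \<in> {A \<in> (\<lambda>c. H #> c) ` C. A \<subseteq> ?D}"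
    then obtain c where c: "c \<in> C" "A = H #> c" "A \<subseteq> ?D"
      by blast
    then obtain t where t: "t \<in> T" "t \<in> H #> c"
      using rep by blast
    then have "H #> t = A"
      using c repr_independence[OF _ _ H] Cc by (metis subsetD)
    then show "A \<in> (\<lambda>t. H #> t) ` (T \<inter> ?D)"
      using t c rcos_self[OF _ H] TC Cc by blast
  qed
  ultimately show ?thesis
    using card_image r_cosets_in_double_coset[OF H C assms(3) x] by metis
qed

lemma involution_in_double_coset_if_rtransversal:
  assumes H: "subgroup H G" and C: "subgroup C G" and "H \<subseteq> C" "finite C"
    and T: "inv_closed_rtransversal G H C T" and x: "x \<in> C" "x \<otimes> x \<in> H"
    and "odd (card ((\<lambda>h. H #> (x \<otimes> h)) ` H))"
  shows "\<exists>y\<in>double_coset G H x. y \<otimes> y = \<one>"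
proof -
  let ?D = "double_coset G H x"
  have TC: "T \<subseteq> C" and Tinv: "\<forall>t\<in>T. inv t \<in> T"
    using T by (auto simp: inv_closed_rtransversal_def)
  have Cc: "C \<subseteq> carrier G"
    by (rule subgroup.subset[OF C])
  have xc: "x \<in> carrier G"
    using x Cc by blast
  have "(\<lambda>z. inv z) ` ?D = ?D"
    using double_coset_inv[OF H xc] double_coset_inv_eq_if_square_mem[OF H xc x(2)] by simp
  then have closed: "inv t \<in> T \<inter> ?D" if "t \<in> T \<inter> ?D" for t
    using that Tinv by blast
  have "finite (T \<inter> ?D)"
    using finite_subset[OF _ assms(4)] TC by blast
  moreover have "odd (card (T \<inter> ?D))"
    using assms(8) card_rtransversal_Int_double_coset[OF H C assms(3) x(1) T] by simp
  ultimately have "\<exists>y\<in>T \<inter> ?D. inv y = y"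
    using closed TC Cc by (intro involution_fixpoint_if_odd_card) auto
  then obtain y where y: "y \<in> ?D" "y \<in> carrier G" "inv y = y"
    using TC Cc by blast
  then have "y \<otimes> y = \<one>"
    using r_inv[OF y(2)] by simp
  then show ?thesis
    using y(1) by blast
qed

end

section \<open>A greedy construction of inverse-closed transversals\<close>

definition inv_closed_reps :: "('a, 'b) monoid_scheme \<Rightarrow> 'a set set \<Rightarrow> 'a set \<Rightarrow> bool" where
  "inv_closed_reps G W T \<longleftrightarrow>
     T \<subseteq> \<Union>W \<and> (\<forall>t\<in>T. inv\<^bsub>G\<^esub> t \<in> T) \<and> (\<forall>A\<in>W. \<exists>!t. t \<in> T \<and> t \<in> A)"

text \<open>The invariant of the greedy construction of an inverse-closed transversal: \<open>W\<close> is the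
  set of right cosets of \<open>L\<close> still lacking a representative.\<close>

definition inv_balanced :: "('a, 'b) monoid_scheme \<Rightarrow> 'a set \<Rightarrow> 'a set set \<Rightarrow> bool" where
  "inv_balanced G L W \<longleftrightarrow> (\<forall>g\<in>carrier G.
     card {A \<in> W. A \<subseteq> double_coset G L g} = card {A \<in> W. A \<subseteq> double_coset G L (inv\<^bsub>G\<^esub> g)} \<and>
     (double_coset G L g = double_coset G L (inv\<^bsub>G\<^esub> g) \<and> odd (card {A \<in> W. A \<subseteq> double_coset G L g})
        \<longrightarrow> (\<exists>y\<in>double_coset G L g. y \<otimes>\<^bsub>G\<^esub> y = \<one>\<^bsub>G\<^esub>)))"

context group
begin

lemma inv_balancedD:
  assumes "inv_balanced G L W" "g \<in> carrier G"
  shows "card {A \<in> W. A \<subseteq> double_coset G L g} = card {A \<in> W. A \<subseteq> double_coset G L (inv g)}"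
    and "double_coset G L g = double_coset G L (inv g) \<Longrightarrow> odd (card {A \<in> W. A \<subseteq> double_coset G L g})
      \<Longrightarrow> \<exists>y\<in>double_coset G L g. y \<otimes> y = \<one>"
  using assms unfolding inv_balanced_def by blast+

lemma inv_closed_reps_insert_pair:
  assumes disj: "pairwise disjnt W" and A: "A \<in> W" "t \<in> A" and B: "B \<in> W" "inv t \<in> B"
    and t: "t \<in> carrier G" "A = B \<Longrightarrow> inv t = t" and T: "inv_closed_reps G (W - {A, B}) T"
  shows "inv_closed_reps G W (insert t (insert (inv t) T))"
proof -
  let ?T = "insert t (insert (inv t) T)"
  have same: "X = Y" if "X \<in> W" "Y \<in> W" "z \<in> X" "z \<in> Y" for X Y z
    using disj that by (auto simp: pairwise_def disjnt_def)
  have T_out: "s \<notin> A \<and> s \<notin> B" if s: "s \<in> T" for s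
  proof -
    obtain X where "X \<in> W - {A, B}" "s \<in> X"
      using s T unfolding inv_closed_reps_def by blast
    then show ?thesis
      using same A(1) B(1) by blast
  qed
  have "\<exists>!s. s \<in> ?T \<and> s \<in> X" if X: "X \<in> W" for X
  proof -
    consider "X = A" | "X = B" | "X \<in> W - {A, B}"
      using X by blast
    then show ?thesis
    proof cases
      case 1
      have "s = t" if "s \<in> ?T" "s \<in> A" for s
        using that T_out same[OF A(1) B(1) _ B(2)] t(2) by (metis insertE)
      then show ?thesis
        using 1 A(2) by (intro ex1I[of _ t]) auto
    next
      case 2
      have "s = inv t" if "s \<in> ?T" "s \<in> B" for s
        using that T_out same[OF A(1) B(1) A(2)] t(2) by (metis insertE)
      then show ?thesis
        using 2 B(2) by (intro ex1I[of _ "inv t"]) auto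
    next
      case 3
      then have "s \<in> ?T \<and> s \<in> X \<longleftrightarrow> s \<in> T \<and> s \<in> X" for s
        using A B same by blast
      moreover have "\<exists>!s. s \<in> T \<and> s \<in> X"
        using 3 T by (simp add: inv_closed_reps_def)
      ultimately show ?thesis
        by simp
    qed
  qed
  moreover have "?T \<subseteq> \<Union>W"
    using T A B by (auto simp: inv_closed_reps_def)
  moreover have "\<forall>s\<in>?T. inv s \<in> ?T"
    using T t(1) by (simp add: inv_closed_reps_def)
  ultimately show ?thesis
    by (simp add: inv_closed_reps_def)
qed

lemma inv_balanced_Diff_pair:
  assumes L: "subgroup L G" and bal: "inv_balanced G L W" and "finite W"
    and A: "A \<in> W" "a \<in> carrier G" "A = L #> a" and B: "B \<in> W" "b \<in> carrier G" "B = L #> b"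
    and ba: "double_coset G L b = double_coset G L (inv a)"
    and odd_AB: "A = B \<Longrightarrow> odd (card {C \<in> W. C \<subseteq> double_coset G L a})"
  shows "inv_balanced G L (W - {A, B})"
  unfolding inv_balanced_def
proof (intro ballI conjI impI)
  fix g assume g: "g \<in> carrier G"
  let ?D = "double_coset G L g" and ?D' = "double_coset G L (inv g)"
  have AD: "A \<subseteq> ?D \<longleftrightarrow> B \<subseteq> ?D'"
    using r_coset_subset_double_coset_swap[OF L A(2) B(2) g ba] A(3) B(3) by simp
  have BD: "B \<subseteq> ?D \<longleftrightarrow> A \<subseteq> ?D'"
    using r_coset_subset_double_coset_swap[OF L A(2) B(2) inv_closed[OF g] ba] A(3) B(3) g by simp
  have split: "card {C \<in> W. C \<subseteq> E} = card {C \<in> W - {A, B}. C \<subseteq> E} + card {C \<in> {A, B}. C \<subseteq> E}"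
    for E
    using A(1) B(1) \<open>finite W\<close> by (intro card_filter_Diff) auto
  have "card {C \<in> {A, B}. C \<subseteq> ?D} = card {C \<in> {A, B}. C \<subseteq> ?D'}"
    using AD BD by (rule card_filter_pair_swap)
  moreover have "card {C \<in> W. C \<subseteq> ?D} = card {C \<in> W. C \<subseteq> ?D'}"
    by (rule inv_balancedD(1)[OF bal g])
  ultimately show "card {C \<in> W - {A, B}. C \<subseteq> ?D} = card {C \<in> W - {A, B}. C \<subseteq> ?D'}"
    using split[of ?D] split[of ?D'] by linarith
  assume sym: "?D = ?D' \<and> odd (card {C \<in> W - {A, B}. C \<subseteq> ?D})"
  have "odd (card {C \<in> W. C \<subseteq> ?D})"
  proof (cases "A \<subseteq> ?D \<and> A = B")
    case True
    then have "double_coset G L a = ?D"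
      using A(2,3) g r_coset_subset_double_coset_iff[OF L] by blast
    then show ?thesis
      using odd_AB True by simp
  next
    case False
    then have "even (card {C \<in> {A, B}. C \<subseteq> ?D})"
      using AD sym by (intro even_card_filter_pair) auto
    then show ?thesis
      using sym[THEN conjunct2] split[of ?D] by simp
  qed
  then show "\<exists>y\<in>?D. y \<otimes> y = \<one>"
    using inv_balancedD(2)[OF bal g] sym by blast
qed

lemma inv_balanced_partner:
  assumes L: "subgroup L G" and bal: "inv_balanced G L W" and "finite W" and W: "W \<subseteq> rcosets L"
    and A: "A \<in> W" "a \<in> carrier G" "A = L #> a"
  obtains B b where "B \<in> W" "b \<in> carrier G" "B = L #> b"
    "double_coset G L b = double_coset G L (inv a)"
    "A = B \<Longrightarrow> odd (card {C \<in> W. C \<subseteq> double_coset G L a})"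
proof (cases "double_coset G L a = double_coset G L (inv a) \<and>
    odd (card {C \<in> W. C \<subseteq> double_coset G L a})")
  case True
  then show thesis
    using that A by blast
next
  case False
  let ?S = "{C \<in> W. C \<subseteq> double_coset G L (inv a)}"
  have "A \<in> {C \<in> W. C \<subseteq> double_coset G L a}"
    using A L by (simp add: r_coset_subset_double_coset_iff)
  then have "card {C \<in> W. C \<subseteq> double_coset G L a} \<noteq> 0"
    using \<open>finite W\<close> by auto
  then have card_S: "card ?S \<noteq> 0"
    using inv_balancedD(1)[OF bal A(2)] by simp
  have "?S - {A} \<noteq> {}"
  proof (cases "A \<in> ?S")
    case True
    then have "double_coset G L a = double_coset G L (inv a)"
      using A L by (simp add: r_coset_subset_double_coset_iff)
    then have "card ?S \<noteq> 1"
      using False inv_balancedD(1)[OF bal A(2)] odd_one by metis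
    then have "card (?S - {A}) \<noteq> 0"
      using card_S True by (simp add: card_Diff_singleton_if)
    then show ?thesis
      by (metis card.empty)
  next
    case False
    then show ?thesis
      using card_S by (metis Diff_empty Diff_insert0 card.empty)
  qed
  then obtain B where B: "B \<in> W" "B \<subseteq> double_coset G L (inv a)" "B \<noteq> A"
    by blast
  then obtain b where b: "b \<in> carrier G" "B = L #> b"
    using W by (auto simp: RCOSETS_def)
  then have "double_coset G L b = double_coset G L (inv a)"
    using B(2) A(2) L by (simp add: r_coset_subset_double_coset_iff)
  then show thesis
    using that B b by blast
qed

lemma inv_pair_in_partner_cosets:
  assumes L: "subgroup L G" and bal: "inv_balanced G L W"
    and a: "a \<in> carrier G" and b: "b \<in> carrier G"
    and ba: "double_coset G L b = double_coset G L (inv a)"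
    and odd_ab: "L #> a = L #> b \<Longrightarrow> odd (card {C \<in> W. C \<subseteq> double_coset G L a})"
  obtains t where "t \<in> L #> a" "inv t \<in> L #> b" "L #> a = L #> b \<Longrightarrow> inv t = t"
proof (cases "L #> a = L #> b")
  case True
  have "a \<in> double_coset G L b"
    using True rcos_self[OF a L] r_coset_subset_double_coset_iff[OF L b b] by blast
  then have "double_coset G L a = double_coset G L (inv a)"
    using ba double_coset_eq_if_mem[OF L b] by simp
  then obtain y where "y \<in> double_coset G L a" "y \<otimes> y = \<one>"
    using inv_balancedD(2)[OF bal a] odd_ab[OF True] by blast
  then obtain z where z: "z \<in> L #> a" "z \<otimes> z = \<one>"
    using involution_in_r_coset_if_in_double_coset[OF L a] by blast
  then have "inv z = z"
    using r_coset_subset_G[OF subgroup.subset[OF L] a] by (auto intro: inv_equality)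
  then show thesis
    using that z True by simp
next
  case False
  have "b \<in> double_coset G L (inv a)"
    using ba double_coset_self[OF L b] by simp
  then show thesis
    using that False inv_pair_if_mem_double_coset_inv[OF L a b] by blast
qed

lemma inv_closed_reps_if_inv_balanced:
  assumes L: "subgroup L G" and "finite W" "W \<subseteq> rcosets L" "inv_balanced G L W"
  shows "\<exists>T. inv_closed_reps G W T"
  using assms(2-4)
proof (induction W rule: finite_psubset_induct)
  case (psubset W)
  note W = \<open>W \<subseteq> rcosets L\<close> and bal = \<open>inv_balanced G L W\<close>
  show ?case
  proof (cases "W = {}")
    case True
    then show ?thesis
      by (auto simp: inv_closed_reps_def)
  next
    case False
    then obtain A where A: "A \<in> W"
      by blast
    then obtain a where a: "a \<in> carrier G" "A = L #> a"
      using W by (auto simp: RCOSETS_def)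
    obtain B b where B: "B \<in> W" "b \<in> carrier G" "B = L #> b"
      and ba: "double_coset G L b = double_coset G L (inv a)"
      and odd_AB: "A = B \<Longrightarrow> odd (card {C \<in> W. C \<subseteq> double_coset G L a})"
      using inv_balanced_partner[OF L bal \<open>finite W\<close> W A a] by blast
    obtain t where t: "t \<in> A" "inv t \<in> B" "A = B \<Longrightarrow> inv t = t"
      using inv_pair_in_partner_cosets[OF L bal a(1) B(2) ba] odd_AB a(2) B(3) by metis
    have "W - {A, B} \<subset> W" "W - {A, B} \<subseteq> rcosets L"
      using A W by auto
    moreover have "inv_balanced G L (W - {A, B})"
      using inv_balanced_Diff_pair[OF L bal \<open>finite W\<close> A a B ba odd_AB] .
    ultimately obtain T where T: "inv_closed_reps G (W - {A, B}) T"
      using psubset.IH by meson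
    have disj: "pairwise disjnt W"
      using pairwise_subset[OF rcos_disjoint[OF L] W] .
    have "t \<in> carrier G"
      using t(1) a r_coset_subset_G[OF subgroup.subset[OF L]] by blast
    then show ?thesis
      using inv_closed_reps_insert_pair[OF disj A t(1) B(1) t(2) _ t(3) T] by blast
  qed
qed

lemma ex_inv_closed_rtransversal_if_involutions:
  assumes L: "subgroup L G" and K: "subgroup K G" and LK: "L \<subseteq> K" and "finite K"
    and involution: "\<And>g. g \<in> K \<Longrightarrow> double_coset G L g = double_coset G L (inv g) \<Longrightarrow>
      odd (card ((\<lambda>l. L #> (g \<otimes> l)) ` L)) \<Longrightarrow> \<exists>y\<in>double_coset G L g. y \<otimes> y = \<one>"
  shows "\<exists>T. inv_closed_rtransversal G L K T"
proof -
  let ?W = "(\<lambda>k. L #> k) ` K"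
  have Kc: "K \<subseteq> carrier G"
    by (rule subgroup.subset[OF K])
  have "finite L"
    using \<open>finite K\<close> LK finite_subset by blast
  have count: "card {A \<in> ?W. A \<subseteq> double_coset G L g} =
      (if g \<in> K then card ((\<lambda>l. L #> (g \<otimes> l)) ` L) else 0)" if "g \<in> carrier G" for g
  proof (cases "g \<in> K")
    case True
    then show ?thesis
      by (simp add: r_cosets_in_double_coset[OF L K LK True])
  next
    case False
    then show ?thesis
      by (subst r_cosets_in_double_coset_outside[OF L K LK that False]) simp
  qed
  have "inv_balanced G L ?W"
    unfolding inv_balanced_def
  proof (intro ballI conjI impI)
    fix g assume g: "g \<in> carrier G"
    have "inv g \<in> K \<longleftrightarrow> g \<in> K"
      using g subgroup.m_inv_closed[OF K] by (metis inv_inv)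
    then show "card {A \<in> ?W. A \<subseteq> double_coset G L g} = card {A \<in> ?W. A \<subseteq> double_coset G L (inv g)}"
      using count[OF g] count[OF inv_closed[OF g]] card_r_cosets_in_double_coset_inv[OF L g \<open>finite L\<close>]
      by simp
    assume "double_coset G L g = double_coset G L (inv g) \<and> odd (card {A \<in> ?W. A \<subseteq> double_coset G L g})"
    then show "\<exists>y\<in>double_coset G L g. y \<otimes> y = \<one>"
      using count[OF g] involution by (cases "g \<in> K") auto
  qed
  moreover have "?W \<subseteq> rcosets L"
    using Kc by (auto simp: RCOSETS_def)
  ultimately obtain T where T: "inv_closed_reps G ?W T"
    using inv_closed_reps_if_inv_balanced[OF L] \<open>finite K\<close> by blast
  have "\<Union>?W \<subseteq> K"
    using L K LK by (auto simp: r_coset_def intro: subgroup.m_closed)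
  then have "T \<subseteq> K"
    using T by (auto simp: inv_closed_reps_def)
  moreover have "\<forall>t\<in>T. inv t \<in> T" "\<forall>g\<in>K. \<exists>!t. t \<in> T \<and> t \<in> L #> g"
    using T by (simp_all add: inv_closed_reps_def)
  ultimately show ?thesis
    unfolding inv_closed_rtransversal_def by blast
qed

end

section \<open>From \<open>H\<close> to \<open>H \<inter> K\<close>\<close>

context group
begin

lemma mem_inter_conj_if_involution:
  assumes H: "subgroup H G" and x: "x \<in> carrier G" "x \<otimes> x \<in> H"
    and z: "z \<in> H #> x" "z \<otimes> z = \<one>"
  shows "z \<otimes> inv x \<in> inter_conj G H x"
proof -
  have zc: "z \<in> carrier G"
    using z(1) r_coset_subset_G[OF subgroup.subset[OF H] x(1)] by blast
  have "z \<otimes> inv x \<in> H"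
    using z(1) x(1) H by (simp add: r_coset_mem_iff)
  moreover have "x \<otimes> (z \<otimes> inv x) \<otimes> inv x = inv (z \<otimes> inv x) \<otimes> inv (x \<otimes> x)"
    using x(1) zc inv_equality[OF z(2) zc zc] by (simp add: m_assoc inv_mult_group)
  ultimately show ?thesis
    using H x(2) by (simp add: inter_conj_def subgroup.m_closed subgroup.m_inv_closed)
qed

lemma conj_mem_r_coset_if_fixed:
  assumes L: "subgroup L G" and x: "x \<in> carrier G" and c: "c \<in> carrier G" and z: "z \<in> carrier G"
    and "inv x \<otimes> c \<otimes> z \<in> inter_conj G L x #> c"
  shows "c \<otimes> z \<otimes> inv c \<in> L #> x"
proof -
  have "inv x \<otimes> c \<otimes> z \<otimes> inv c \<in> inter_conj G L x"
    using assms(5) x c z r_coset_mem_iff[OF subgroup_inter_conj[OF L x]] by simp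
  then have "x \<otimes> (inv x \<otimes> c \<otimes> z \<otimes> inv c) \<otimes> inv x \<in> L"
    by (simp add: inter_conj_def)
  then show ?thesis
    using x c z L by (simp add: r_coset_mem_iff m_assoc)
qed

lemma involution_in_r_coset_of_subgroup:
  assumes L: "subgroup L G" and H: "subgroup H G" and LH: "L \<subseteq> H" and "finite H"
    and x: "x \<in> carrier G" "x \<otimes> x \<in> L" and z: "z \<in> H #> x" "z \<otimes> z = \<one>"
    and odd: "odd (card ((\<lambda>c. inter_conj G L x #> c) ` inter_conj G H x))"
  shows "\<exists>w\<in>L #> x. w \<otimes> w = \<one>"
proof -
  let ?NL = "inter_conj G L x" and ?NH = "inter_conj G H x"
  have xxH: "x \<otimes> x \<in> H"
    using x(2) LH by blast
  have zc: "z \<in> carrier G"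
    using z(1) r_coset_subset_G[OF subgroup.subset[OF H] x(1)] by blast
  have NH: "subgroup ?NH G" and NL: "subgroup ?NL G"
    using subgroup_inter_conj[OF H x(1)] subgroup_inter_conj[OF L x(1)] .
  have NHc: "c \<in> carrier G" if "c \<in> ?NH" for c
    using that subgroup.mem_carrier[OF NH] by blast
  have hNH: "z \<otimes> inv x \<in> ?NH"
    by (rule mem_inter_conj_if_involution[OF H x(1) xxH z])
  \<comment> \<open>\<open>c \<mapsto> x\<inverse> c z\<close> induces an involution on the right cosets of \<open>?NL\<close> in \<open>?NH\<close>\<close>
  define \<phi> where "\<phi> c = inv x \<otimes> c \<otimes> z" for c
  have "\<exists>c\<in>?NH. \<phi> c \<in> ?NL #> c"
  proof (rule r_coset_fixed_by_involution[OF NL NH _ odd])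
    show "finite ?NH"
      using \<open>finite H\<close> by (simp add: inter_conj_def)
    show "\<phi> c \<in> ?NH" if "c \<in> ?NH" for c
      using inter_conj_conj_closed[OF H x(1) xxH subgroup.m_closed[OF NH that hNH]]
        that NHc x(1) zc by (simp add: \<phi>_def m_assoc)
    show "\<phi> (n \<otimes> c) \<in> ?NL #> \<phi> c" if "n \<in> ?NL" "c \<in> ?NH" for n c
    proof -
      have "\<phi> (n \<otimes> c) = (inv x \<otimes> n \<otimes> x) \<otimes> \<phi> c"
        using that NHc subgroup.mem_carrier[OF NL] x(1) zc by (simp add: \<phi>_def m_assoc)
      then show ?thesis
        using rcosI[OF inter_conj_conj_closed[OF L x that(1)] subgroup.subset[OF NL]]
          that(2) NHc x(1) zc by (simp add: \<phi>_def)
    qed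
    show "\<phi> (\<phi> c) \<in> ?NL #> c" if "c \<in> ?NH" for c
    proof -
      have "\<phi> (\<phi> c) = inv (x \<otimes> x) \<otimes> c"
        using that NHc x(1) zc z(2) by (simp add: \<phi>_def m_assoc inv_mult_group)
      then show ?thesis
        using that NHc rcosI[OF inv_square_mem_inter_conj[OF L x] subgroup.subset[OF NL]] by simp
    qed
  qed
  then obtain c where c: "c \<in> ?NH" "\<phi> c \<in> ?NL #> c"
    by blast
  then have "c \<otimes> z \<otimes> inv c \<in> L #> x"
    using conj_mem_r_coset_if_fixed[OF L x(1) NHc[OF c(1)] zc] by (simp add: \<phi>_def)
  moreover have "(c \<otimes> z \<otimes> inv c) \<otimes> (c \<otimes> z \<otimes> inv c) = c \<otimes> (z \<otimes> z) \<otimes> inv c"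
    using c(1) NHc zc by (simp add: m_assoc)
  then have "(c \<otimes> z \<otimes> inv c) \<otimes> (c \<otimes> z \<otimes> inv c) = \<one>"
    using c(1) NHc z(2) by simp
  ultimately show ?thesis
    by blast
qed

lemma odd_indices_if_two_part_eq:
  assumes L: "subgroup L G" and H: "subgroup H G" and LH: "L \<subseteq> H" and "finite H"
    and x: "x \<in> carrier G" and tp: "two_part (card H) = two_part (card L)"
    and odd: "odd (card ((\<lambda>l. L #> (x \<otimes> l)) ` L))"
  shows "odd (card ((\<lambda>h. H #> (x \<otimes> h)) ` H))"
    and "odd (card ((\<lambda>c. inter_conj G L x #> c) ` inter_conj G H x))"
proof -
  let ?NL = "inter_conj G L x" and ?NH = "inter_conj G H x"
  let ?cL = "card ((\<lambda>l. L #> (x \<otimes> l)) ` L)" and ?cH = "card ((\<lambda>h. H #> (x \<otimes> h)) ` H)"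
    and ?cN = "card ((\<lambda>c. ?NL #> c) ` ?NH)"
  have "finite L"
    using \<open>finite H\<close> LH finite_subset by blast
  have L_eq: "?cL * card ?NL = card L"
    by (rule card_r_cosets_in_double_coset[OF L x \<open>finite L\<close>])
  have H_eq: "?cH * card ?NH = card H"
    by (rule card_r_cosets_in_double_coset[OF H x \<open>finite H\<close>])
  have N_eq: "?cN * card ?NL = card ?NH"
    using subgroup_inter_conj[OF L x] subgroup_inter_conj[OF H x] LH \<open>finite H\<close>
    by (intro lagrange_within) (auto simp: inter_conj_def)
  have "card H \<noteq> 0"
    using \<open>finite H\<close> subgroup.one_closed[OF H] by auto
  moreover have "card ?NL \<noteq> 0"
    using \<open>finite L\<close> subgroup.one_closed[OF subgroup_inter_conj[OF L x]]
    by (auto simp: inter_conj_def)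
  ultimately have "?cH \<noteq> 0" "card ?NH \<noteq> 0"
    using H_eq by (metis mult_zero_left, metis mult_zero_right)
  then have "?cH \<noteq> 0" "?cN \<noteq> 0"
    using N_eq by (simp, metis mult_zero_left)
  moreover have "two_part (?cH * (?cN * card ?NL)) = two_part (?cL * card ?NL)"
    using tp L_eq H_eq N_eq by simp
  ultimately show "odd ?cH" "odd ?cN"
    using odd_factors_if_two_part_eq odd \<open>card ?NL \<noteq> 0\<close> by blast+
qed

lemma involution_in_double_coset_Int:
  assumes fin: "finite (carrier G)" and H: "subgroup H G" and K: "subgroup K G"
    and HK: "subgroup (H <#> K) G" and tp: "two_part (card H) = two_part (card (H \<inter> K))"
    and T: "inv_closed_rtransversal G H (H <#> K) T"
    and g: "g \<in> K" and sym: "double_coset G (H \<inter> K) g = double_coset G (H \<inter> K) (inv g)"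
    and odd: "odd (card ((\<lambda>l. (H \<inter> K) #> (g \<otimes> l)) ` (H \<inter> K)))"
  shows "\<exists>y\<in>double_coset G (H \<inter> K) g. y \<otimes> y = \<one>"
proof -
  let ?L = "H \<inter> K"
  have L: "subgroup ?L G"
    by (rule subgroups_Inter_pair[OF H K])
  have gc: "g \<in> carrier G"
    using g subgroup.mem_carrier[OF K] by blast
  obtain x where x: "x \<in> double_coset G ?L g" "x \<otimes> x \<in> ?L"
    using square_mem_in_self_inverse_double_coset[OF L gc sym] by blast
  have xK: "x \<in> K"
    using x(1) double_coset_subset[OF L K _ g] by blast
  have xc: "x \<in> carrier G"
    using xK subgroup.mem_carrier[OF K] by blast
  have dx: "double_coset G ?L x = double_coset G ?L g"
    by (rule double_coset_eq_if_mem[OF L gc x(1)])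
  have finH: "finite H"
    using fin subgroup.subset[OF H] finite_subset by blast
  have "odd (card ((\<lambda>l. ?L #> (x \<otimes> l)) ` ?L))"
    using odd r_cosets_in_double_coset[OF L K _ xK] r_cosets_in_double_coset[OF L K _ g] dx by auto
  note odd_H = odd_indices_if_two_part_eq[OF L H _ finH xc tp this]
  have "?L \<subseteq> H" "H \<subseteq> H <#> K" "x \<in> H <#> K" "finite (H <#> K)"
    using subset_set_mult_right[OF K subgroup.subset[OF H]]
      subset_set_mult_left[OF H subgroup.subset[OF K]] xK fin subgroup.subset[OF HK]
      finite_subset by auto
  then obtain y where "y \<in> double_coset G H x" "y \<otimes> y = \<one>"
    using involution_in_double_coset_if_rtransversal[OF H HK _ _ T] x(2) odd_H(1) by blast
  then obtain z where "z \<in> H #> x" "z \<otimes> z = \<one>"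
    using involution_in_r_coset_if_in_double_coset[OF H xc] by blast
  then obtain w where "w \<in> ?L #> x" "w \<otimes> w = \<one>"
    using involution_in_r_coset_of_subgroup[OF L H _ finH xc x(2)] odd_H(2) by blast
  moreover have "?L #> x \<subseteq> double_coset G ?L g"
    using r_coset_subset_double_coset_iff[OF L xc gc] dx by blast
  ultimately show ?thesis
    by blast
qed

end

theorem lemma4p3:
  fixes G :: "('a, 'b) monoid_scheme" and H K :: "'a set"
  assumes "group G" and "finite (carrier G)"
    and "subgroup H G" and "subgroup K G"
    and "subgroup (H <#>\<^bsub>G\<^esub> K) G"
    and "two_part (card H) = two_part (card (H \<inter> K))"
  shows "subgroup_perfect_code (H \<inter> K) (G\<lparr>carrier := K\<rparr>) \<longleftrightarrow>
         subgroup_perfect_code H (G\<lparr>carrier := H <#>\<^bsub>G\<^esub> K\<rparr>)"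
proof -
  interpret group G by fact
  note fin = assms(2) and H = assms(3) and K = assms(4) and HK = assms(5)
  have L: "subgroup (H \<inter> K) G"
    by (rule subgroups_Inter_pair[OF H K])
  have "finite K"
    using fin subgroup.subset[OF K] finite_subset by blast
  have "H \<subseteq> H <#>\<^bsub>G\<^esub> K"
    by (rule subset_set_mult_right[OF K subgroup.subset[OF H]])
  moreover have "(\<exists>T. inv_closed_rtransversal G (H \<inter> K) K T) \<longleftrightarrow>
      (\<exists>T. inv_closed_rtransversal G H (H <#>\<^bsub>G\<^esub> K) T)"
  proof
    assume "\<exists>T. inv_closed_rtransversal G (H \<inter> K) K T"
    then show "\<exists>T. inv_closed_rtransversal G H (H <#>\<^bsub>G\<^esub> K) T"
      using inv_closed_rtransversal_set_mult[OF H K] by blast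
  next
    assume "\<exists>T. inv_closed_rtransversal G H (H <#>\<^bsub>G\<^esub> K) T"
    then obtain T where "inv_closed_rtransversal G H (H <#>\<^bsub>G\<^esub> K) T" ..
    then show "\<exists>T. inv_closed_rtransversal G (H \<inter> K) K T"
      using involution_in_double_coset_Int[OF fin H K HK assms(6)]
      by (intro ex_inv_closed_rtransversal_if_involutions[OF L K _ \<open>finite K\<close>]) auto
  qed
  ultimately show ?thesis
    using L H by (simp add: subgroup_perfect_code_iff_rtransversal[OF K]
        subgroup_perfect_code_iff_rtransversal[OF HK])
qed

end
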